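(* Let $r$ be an integer with $r>0$. For $N\in\mathbb{N}$ let $$K_{r,N}(z,z')=e^{-\frac{\pi}{2}(|z|^2+|z'|^2)}\sum_{j=0}^{N-1}H_{j,r}(z,\overline{z})\,\overline{H_{j,r}(z',\overline{z'})},\qquad z,z'\in\mathbb{C},$$ and let $\rho_{r,N}(z)=K_{r,N}(z,z)$. Then $$\rho_{r,N}\Big(\sqrt{\tfrac{N}{\pi}}\,\cdot\Big)\longrightarrow 1_{\mathbb{D}}\quad\text{in } L^1(\mathbb{R}^2)\text{ as } N\to\infty,$$ where $\mathbb{D}$ is the unit disk. Moreover there is a constant $C_r$ (depending only on $r$) such that for all $N$, $$\big\|\rho_{r,N}-1_{\mathbb{D}_{\sqrt{N/\pi}}}\big\|_{L^1(\mathbb{R}^2)}\le C_r\sqrt{N},$$ where $\mathbb{D}_{\rho}$ denotes the disk of radius $\rho$ centered at the origin.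
   Context: $\mathbb{C}$ is identified with $\mathbb{R}^2$. The Laguerre polynomials are $L_j^{\alpha}(x)=\sum_{i=0}^{j}(-1)^i\binom{j+\alpha}{j-i}\frac{x^i}{i!}$ for $j\ge0$, $j+\alpha\ge0$. The complex Hermite polynomials are, for $j,r\ge 0$, $H_{j,r}(z,\overline z)=\sqrt{\frac{r!}{j!}}\pi^{\frac{j-r}{2}}z^{j-r}L_r^{j-r}(\pi|z|^2)$ if $j>r$, and $H_{j,r}(z,\overline z)=(-1)^{r-j}\sqrt{\frac{j!}{r!}}\pi^{\frac{r-j}{2}}\overline{z}^{\,r-j}L_j^{r-j}(\pi|z|^2)$ if $j\le r$. The function $K_{r,N}$ is the correlation kernel of the finite $(r,N)$-pure polyanalytic Ginibre ensemble and $\rho_{r,N}$ its one-point intensity. *)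

theory Defs
  imports "HOL-Analysis.Analysis"
begin

definition laguerre :: "nat \<Rightarrow> nat \<Rightarrow> real \<Rightarrow> real" where
  "laguerre j \<alpha> x = (\<Sum>i=0..j. (-1)^i * real ((j + \<alpha>) choose (j - i)) * x^i / fact i)"

definition cHermite :: "nat \<Rightarrow> nat \<Rightarrow> complex \<Rightarrow> complex" where
  "cHermite j r z =
     (if j > r then
        complex_of_real (sqrt (fact r / fact j) * pi powr (real (j - r) / 2)) * z ^ (j - r)
          * complex_of_real (laguerre r (j - r) (pi * (cmod z)^2))
      else
        complex_of_real ((-1)^(r - j) * sqrt (fact j / fact r) * pi powr (real (r - j) / 2))
          * (cnj z) ^ (r - j) * complex_of_real (laguerre j (r - j) (pi * (cmod z)^2)))"

definition Kker :: "nat \<Rightarrow> nat \<Rightarrow> complex \<Rightarrow> complex \<Rightarrow> complex" where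
  "Kker r N z w = complex_of_real (exp (- (pi / 2) * ((cmod z)^2 + (cmod w)^2)))
     * (\<Sum>j<N. cHermite j r z * cnj (cHermite j r w))"

definition rho :: "nat \<Rightarrow> nat \<Rightarrow> complex \<Rightarrow> complex" where
  "rho r N z = Kker r N z z"

end

theory Submission
  imports Defs
begin

text \<open>
  In the radial variable \<open>t = \<pi>|z|\<^sup>2\<close> the intensity becomes \<open>\<rho>\<^sub>r\<^sub>,\<^sub>N = \<Sum>\<^sub>j\<^sub><\<^sub>N q\<^sub>j(t)\<close>, where
  \<open>q\<^sub>j(t) = exp(-t) t\<^sup>j P\<^sub>r(j,t)\<^sup>2 / (j! r! t\<^sup>r)\<close> and \<open>P\<^sub>r(j,t)\<close> is, up to the factor \<open>(-t)\<^sup>r\<close>, the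
  Charlier polynomial in \<open>j\<close>. Each \<open>q\<^sub>j\<close> integrates to \<open>1\<close> over \<open>t > 0\<close>, so the radial
  intensity has total mass \<open>N\<close>, which is also the mass of the indicator of \<open>[0, N)\<close>;
  hence the \<open>L\<^sup>1\<close> distance equals twice the deficit \<open>\<integral>\<^sub>0\<^sup>N (1 - \<rho>)\<close>. For fixed \<open>t\<close>,
  orthogonality of the Charlier polynomials with respect to the Poisson weights makes
  \<open>j \<mapsto> q\<^sub>j(t)\<close> a probability distribution with mean \<open>t + r\<close> and variance \<open>(2r+1)t\<close>,
  so Chebyshev's inequality bounds \<open>1 - \<rho>(t)\<close> by \<open>(2r+1)t / (N - r - t)\<^sup>2\<close>. Integrating
  this up to \<open>N - r - \<surd>N\<close> and the trivial bound \<open>1\<close> beyond gives a deficit of order \<open>\<surd>N\<close>;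
  the rescaled statement follows by a change of variables.
\<close>

section \<open>Polar coordinates\<close>

lemma emeasure_pi_norm_sq_atMost:
  "emeasure lborel ((\<lambda>z::complex. pi * (cmod z)^2) -` {..a}) = ennreal (max 0 a)"
proof (cases "a < 0")
  case True
  then have "(\<lambda>z::complex. pi * (cmod z)^2) -` {..a} = {}"
    by (auto simp: not_le) (smt (verit) pi_gt_zero zero_le_power2 mult_nonneg_nonneg)
  then show ?thesis using True by simp
next
  case False
  have "pi * (cmod z)^2 \<le> a \<longleftrightarrow> cmod z \<le> sqrt (a / pi)" for z :: complex
  proof -
    have "pi * (cmod z)^2 \<le> a \<longleftrightarrow> (cmod z)^2 \<le> a / pi"
      by (simp add: field_simps mult.commute)
    also have "\<dots> \<longleftrightarrow> cmod z \<le> sqrt (a / pi)"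
      using False by (metis norm_ge_zero real_sqrt_le_iff real_sqrt_abs abs_norm_cancel)
    finally show ?thesis .
  qed
  then have "(\<lambda>z::complex. pi * (cmod z)^2) -` {..a} = cball 0 (sqrt (a / pi))"
    by (auto simp: dist_norm)
  then show ?thesis
    using False by (simp add: emeasure_cball unit_ball_vol_2 power2_eq_square)
qed

lemma distr_pi_norm_sq_lborel:
  "distr lborel borel (\<lambda>z::complex. pi * (cmod z)^2) = density lborel (indicator {0..})"
proof (rule measure_eqI_generator_eq_countable[where E="range atMost" and \<Omega>=UNIV
      and A="range (\<lambda>n::nat. {..real n})"])
  have distr_atMost:
    "emeasure (distr lborel borel (\<lambda>z::complex. pi * (cmod z)^2)) {..a} = ennreal (max 0 a)" for a
    by (subst emeasure_distr) (auto simp: emeasure_pi_norm_sq_atMost)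
  have density_atMost: "emeasure (density lborel (indicator {0..})) {..a} = ennreal (max 0 a)"
    for a :: real
  proof -
    have "emeasure (density lborel (indicator {0..})) {..a}
        = (\<integral>\<^sup>+x. indicator {0..} x * indicator {..a} x \<partial>lborel)"
      by (subst emeasure_density) (auto simp: mult.commute)
    also have "\<dots> = (\<integral>\<^sup>+x. indicator {0..a} x \<partial>lborel)"
      by (intro nn_integral_cong) (auto split: split_indicator)
    finally show ?thesis by (cases "a < 0") (auto simp: max_def)
  qed
  show "emeasure (distr lborel borel (\<lambda>z::complex. pi * (cmod z)^2)) X
      = emeasure (density lborel (indicator {0..})) X" if "X \<in> range atMost" for X
    using that distr_atMost density_atMost by auto
  show "emeasure (distr lborel borel (\<lambda>z::complex. pi * (cmod z)^2)) X \<noteq> \<infinity>"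
    if "X \<in> range (\<lambda>n::nat. {..real n})" for X
    using that distr_atMost by auto
qed (auto simp: Int_stable_def borel_eq_atMost intro: real_arch_simple)

lemma nn_integral_pi_norm_sq:
  assumes [measurable]: "h \<in> borel_measurable borel"
  shows "(\<integral>\<^sup>+z. h (pi * (cmod z)^2) \<partial>(lborel::complex measure))
       = (\<integral>\<^sup>+t. indicator {0..} t * h t \<partial>lborel)"
proof -
  have "(\<integral>\<^sup>+z. h (pi * (cmod z)^2) \<partial>(lborel::complex measure))
      = (\<integral>\<^sup>+t. h t \<partial>distr lborel borel (\<lambda>z::complex. pi * (cmod z)^2))"
    by (subst nn_integral_distr) auto
  then show ?thesis
    by (simp add: distr_pi_norm_sq_lborel nn_integral_density)
qed

lemma nn_integral_pi_norm_sq_scaled: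
  assumes [measurable]: "h \<in> borel_measurable borel" and c: "c > 0"
  shows "(\<integral>\<^sup>+z. h (c * (pi * (cmod z)^2)) \<partial>(lborel::complex measure))
       = ennreal (1 / c) * (\<integral>\<^sup>+t. indicator {0..} t * h t \<partial>lborel)"
proof -
  have "(\<integral>\<^sup>+t. indicator {0..} t * h t \<partial>lborel)
      = ennreal c * (\<integral>\<^sup>+t. indicator {0..} (c * t) * h (c * t) \<partial>lborel)"
    using nn_integral_real_affine[of "\<lambda>t. indicator {0..} t * h t" c 0] c by simp
  also have "(\<integral>\<^sup>+t. indicator {0..} (c * t) * h (c * t) \<partial>lborel)
      = (\<integral>\<^sup>+z. h (c * (pi * (cmod z)^2)) \<partial>(lborel::complex measure))"
    using c by (subst nn_integral_pi_norm_sq[where h="\<lambda>t. h (c * t)"])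
      (auto intro!: nn_integral_cong simp: indicator_def zero_le_mult_iff)
  finally show ?thesis
    using c by (simp add: mult.assoc[symmetric] ennreal_mult[symmetric])
qed

section \<open>Falling factorials and Charlier polynomials\<close>

definition ffact :: "nat \<Rightarrow> nat \<Rightarrow> real" where
  "ffact j k = real (j choose k) * fact k"

lemma ffact_0 [simp]: "ffact j 0 = 1"
  by (simp add: ffact_def)

lemma ffact_eq_0: "j < k \<Longrightarrow> ffact j k = 0"
  by (simp add: ffact_def)

lemma ffact_mult_fact:
  assumes "k \<le> j"
  shows "ffact j k * fact (j - k) = fact j"
proof -
  have "real (fact k * fact (j - k) * (j choose k)) = fact j"
    using binomial_fact_lemma[OF assms] by (simp only: of_nat_fact)
  then show ?thesis
    by (simp add: ffact_def mult_ac)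
qed

lemma ffact_Suc: "ffact j (Suc k) = real j * ffact (j - 1) k"
proof (cases j)
  case (Suc i)
  have "real (Suc i choose Suc k) * real (Suc k) = real (Suc i) * real (i choose k)"
    using Suc_times_binomial_eq[of i k] by (metis of_nat_mult)
  then show ?thesis
    using Suc by (simp add: ffact_def mult_ac)
qed (simp add: ffact_def)

lemma ffact_Suc_Suc: "ffact (Suc j) (Suc k) = ffact j (Suc k) + real (Suc k) * ffact j k"
  by (simp add: ffact_def algebra_simps)

lemma ffact_Suc_right: "ffact j (Suc k) = ffact j k * (real j - real k)"
proof (cases "k < j")
  case True
  have "ffact j (Suc k) * fact (j - Suc k) * (real j - real k) = ffact j k * fact (j - k) * (real j - real k)"
    using True by (simp add: ffact_mult_fact)
  also have "fact (j - k) = (real j - real k) * fact (j - Suc k)"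
    using True by (metis Suc_diff_Suc fact_Suc of_nat_diff less_imp_le of_nat_fact)
  finally show ?thesis
    using True by (simp add: mult_ac)
next
  case False
  then show ?thesis
    by (cases "k = j") (auto simp: ffact_def binomial_eq_0)
qed

text \<open>\<open>charlier r j t = (-t)\<^sup>r C\<^sub>r(j; t)\<close> for the Charlier polynomials \<open>C\<^sub>r(\<cdot>; t)\<close>.\<close>

definition charlier :: "nat \<Rightarrow> nat \<Rightarrow> real \<Rightarrow> real" where
  "charlier r j t = (\<Sum>k\<le>r. real (r choose k) * ffact j k * (-t)^(r - k))"

lemma charlier_0 [simp]: "charlier 0 j t = 1"
  by (simp add: charlier_def)

lemma charlier_Suc: "charlier (Suc r) j t = - t * charlier r j t + real j * charlier r (j - 1) t"
proof -
  define c where "c k = real (r choose k) * ffact j k" for k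
  have shift: "- t * charlier r j t = (-t)^Suc r + (\<Sum>k\<le>r. real (r choose Suc k) * ffact j (Suc k) * (-t)^(r - k))"
  proof -
    have "- t * charlier r j t = (\<Sum>k\<le>r. c k * (-t)^(Suc r - k))"
      unfolding charlier_def sum_distrib_left by (intro sum.cong) (auto simp: c_def Suc_diff_le)
    also have "\<dots> = (\<Sum>k\<le>Suc r. c k * (-t)^(Suc r - k))"
      by (simp add: c_def)
    also have "\<dots> = (-t)^Suc r + (\<Sum>k\<le>r. real (r choose Suc k) * ffact j (Suc k) * (-t)^(r - k))"
      by (subst sum.atMost_Suc_shift) (simp add: c_def)
    finally show ?thesis .
  qed
  have "real j * charlier r (j - 1) t = (\<Sum>k\<le>r. real (r choose k) * ffact j (Suc k) * (-t)^(r - k))"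
    by (simp add: charlier_def sum_distrib_left ffact_Suc algebra_simps)
  moreover have "charlier (Suc r) j t = (-t)^Suc r + (\<Sum>k\<le>r. real (Suc r choose Suc k) * ffact j (Suc k) * (-t)^(r - k))"
    unfolding charlier_def by (subst sum.atMost_Suc_shift) simp
  ultimately show ?thesis
    using shift by (simp add: sum.distrib algebra_simps)
qed

lemma charlier_Suc_right: "charlier r (Suc j) t = charlier r j t + real r * charlier (r - 1) j t"
proof (cases r)
  case (Suc s)
  have "charlier r (Suc j) t - charlier r j t
      = (\<Sum>k\<le>Suc s. real (Suc s choose k) * (ffact (Suc j) k - ffact j k) * (-t)^(Suc s - k))"
    unfolding charlier_def Suc by (simp add: sum_subtractf algebra_simps)
  also have "\<dots> = (\<Sum>k\<le>s. real (Suc s choose Suc k) * real (Suc k) * ffact j k * (-t)^(s - k))"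
    by (subst sum.atMost_Suc_shift) (simp add: ffact_Suc_Suc mult_ac)
  also have "\<dots> = (\<Sum>k\<le>s. real (Suc s) * (real (s choose k) * ffact j k * (-t)^(s - k)))"
  proof (rule sum.cong)
    fix k
    have "real (Suc s choose Suc k) * real (Suc k) = real (Suc s) * real (s choose k)"
      using Suc_times_binomial_eq[of s k] by (metis of_nat_mult)
    then show "real (Suc s choose Suc k) * real (Suc k) * ffact j k * (-t)^(s - k)
        = real (Suc s) * (real (s choose k) * ffact j k * (-t)^(s - k))"
      by (simp only: mult.assoc[symmetric])
  qed simp
  also have "\<dots> = real r * charlier (r - 1) j t"
    by (simp add: charlier_def sum_distrib_left Suc)
  finally show ?thesis by simp
qed simp

lemma charlier_three_term:
  "(real j - t - real r) * charlier r j t = charlier (Suc r) j t + real r * t * charlier (r - 1) j t"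
proof -
  have "real j * charlier r (j - 1) t = real j * (charlier r j t - real r * charlier (r - 1) (j - 1) t)"
    by (cases j) (simp_all add: charlier_Suc_right)
  moreover have "real r * charlier r j t
      = real r * (- t * charlier (r - 1) j t + real j * charlier (r - 1) (j - 1) t)"
    by (cases r) (simp_all add: charlier_Suc)
  ultimately show ?thesis
    using charlier_Suc[of r j t] by (simp add: algebra_simps)
qed

lemma abs_charlier_le: "t \<ge> 0 \<Longrightarrow> \<bar>charlier r j t\<bar> \<le> (t + real j)^r"
proof (induction r arbitrary: j)
  case (Suc r)
  have IH': "\<bar>charlier r (j - 1) t\<bar> \<le> (t + real j)^r"
  proof (cases j)
    case (Suc i)
    have "(t + real i)^r \<le> (t + real j)^r"
      using Suc Suc.prems by (intro power_mono) auto
    then show ?thesis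
      using Suc.IH[of i] Suc.prems Suc by simp
  qed (use Suc.IH[of 0] Suc.prems in simp)
  have "\<bar>charlier (Suc r) j t\<bar> \<le> \<bar>- t * charlier r j t\<bar> + \<bar>real j * charlier r (j - 1) t\<bar>"
    unfolding charlier_Suc by (rule abs_triangle_ineq)
  also have "\<dots> = t * \<bar>charlier r j t\<bar> + real j * \<bar>charlier r (j - 1) t\<bar>"
    using Suc.prems by (simp add: abs_mult)
  also have "\<dots> \<le> t * (t + real j)^r + real j * (t + real j)^r"
    using Suc.IH[of j] IH' Suc.prems by (intro add_mono mult_left_mono) auto
  also have "\<dots> = (t + real j)^Suc r"
    by (simp add: algebra_simps)
  finally show ?case .
qed simp

section \<open>Orthogonality with respect to the Poisson weights\<close>

lemma sums_exp_real: "(\<lambda>n. x^n / fact n) sums exp (x::real)"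
  using exp_converges[of x] by (simp add: divide_inverse mult.commute)

lemma power_le_fact_mult_exp: "(x::real) \<ge> 0 \<Longrightarrow> x^n \<le> fact n * exp x"
proof -
  assume x: "x \<ge> 0"
  have "(\<Sum>m\<in>{n}. x^m / fact m) \<le> (\<Sum>m. x^m / fact m)"
    using sums_summable[OF sums_exp_real[of x]] x by (intro sum_le_suminf) auto
  then have "x^n / fact n \<le> exp x"
    using sums_unique[OF sums_exp_real[of x]] by simp
  then show ?thesis
    by (simp add: field_simps)
qed

definition exp_term :: "real \<Rightarrow> nat \<Rightarrow> real" where
  "exp_term t j = t^j / fact j"

lemma exp_term_nonneg: "t \<ge> 0 \<Longrightarrow> exp_term t j \<ge> 0"
  by (simp add: exp_term_def)

lemma summable_exp_term_mult:
  assumes t: "t \<ge> 0" and c: "c \<ge> 0" and f: "\<And>j. \<bar>f j\<bar> \<le> (c + real j)^n"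
  shows "summable (\<lambda>j. exp_term t j * f j)"
proof (rule summable_comparison_test')
  show "summable (\<lambda>j. fact n * exp c * ((exp 1 * t)^j / fact j))"
    using sums_exp_real[of "exp 1 * t"] by (intro summable_mult sums_summable)
  fix j :: nat
  have "norm (exp_term t j * f j) \<le> exp_term t j * (fact n * exp (c + real j))"
    using f[of j] power_le_fact_mult_exp[of "c + real j" n] c t
    by (auto simp: abs_mult exp_term_nonneg intro!: mult_left_mono)
  also have "\<dots> = fact n * exp c * ((exp 1 * t)^j / fact j)"
    by (simp add: exp_term_def exp_add power_mult_distrib exp_of_nat_mult[symmetric] algebra_simps)
  finally show "norm (exp_term t j * f j) \<le> fact n * exp c * ((exp 1 * t)^j / fact j)" .
qed

lemma sums_exp_term_mult_shift:
  assumes "summable (\<lambda>m. exp_term t m * f m)"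
  shows "(\<lambda>j. exp_term t j * (real j * f (j - 1))) sums (t * (\<Sum>m. exp_term t m * f m))"
proof -
  have "(\<lambda>m. t * (exp_term t m * f m)) sums (t * (\<Sum>m. exp_term t m * f m))"
    using assms by (intro sums_mult summable_sums)
  moreover have "(\<lambda>m. exp_term t (Suc m) * (real (Suc m) * f (Suc m - 1))) = (\<lambda>m. t * (exp_term t m * f m))"
    by (rule ext) (simp add: exp_term_def field_simps del: of_nat_Suc)
  ultimately have "(\<lambda>m. exp_term t (Suc m) * (real (Suc m) * f (Suc m - 1)))
      sums (t * (\<Sum>m. exp_term t m * f m))"
    by simp
  then show ?thesis
    by (subst (asm) sums_Suc_iff) simp
qed

lemma summable_exp_term_charlier_mult:
  assumes "t \<ge> 0"
  shows "summable (\<lambda>j. exp_term t j * (charlier r j t * charlier s (j + d) t))"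
proof (rule summable_exp_term_mult[where c="t + real d" and n="r + s"])
  fix j
  have "\<bar>charlier r j t * charlier s (j + d) t\<bar> \<le> (t + real j)^r * (t + real (j + d))^s"
    unfolding abs_mult using assms by (intro mult_mono abs_charlier_le) auto
  also have "\<dots> \<le> (t + real d + real j)^r * (t + real d + real j)^s"
    using assms by (intro mult_mono power_mono) auto
  finally show "\<bar>charlier r j t * charlier s (j + d) t\<bar> \<le> (t + real d + real j)^(r + s)"
    by (simp add: power_add)
qed (use assms in auto)

definition charlier_ip :: "real \<Rightarrow> nat \<Rightarrow> nat \<Rightarrow> real" where
  "charlier_ip t r s = (\<Sum>j. exp_term t j * (charlier r j t * charlier s j t))"

lemma summable_charlier_ip: "t \<ge> 0 \<Longrightarrow> summable (\<lambda>j. exp_term t j * (charlier r j t * charlier s j t))"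
  using summable_exp_term_charlier_mult[of t r s 0] by simp

lemma charlier_ip_commute: "charlier_ip t r s = charlier_ip t s r"
  by (simp add: charlier_ip_def mult.commute)

lemma charlier_ip_0_0: "charlier_ip t 0 0 = exp t"
  using sums_unique[OF sums_exp_real[of t]] by (simp add: charlier_ip_def exp_term_def)

text \<open>Summation by parts: the shift \<open>j \<mapsto> j - 1\<close> in \<open>charlier_Suc\<close> is absorbed by the weights.\<close>

lemma charlier_ip_Suc:
  assumes t: "t \<ge> 0"
  shows "charlier_ip t (Suc r) s = t * real s * charlier_ip t r (s - 1)"
proof -
  let ?f = "\<lambda>m. charlier r m t * charlier s (Suc m) t"
  have shifted: "(\<lambda>j. exp_term t j * (real j * charlier r (j - 1) t * charlier s j t))
      sums (t * (\<Sum>m. exp_term t m * ?f m))"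
  proof -
    have "(\<lambda>j. exp_term t j * (real j * ?f (j - 1))) sums (t * (\<Sum>m. exp_term t m * ?f m))"
      using summable_exp_term_charlier_mult[OF t, of r s 1]
      by (intro sums_exp_term_mult_shift) simp
    moreover have "(\<lambda>j. exp_term t j * (real j * ?f (j - 1)))
        = (\<lambda>j. exp_term t j * (real j * charlier r (j - 1) t * charlier s j t))"
    proof (rule ext)
      fix j
      show "exp_term t j * (real j * ?f (j - 1)) = exp_term t j * (real j * charlier r (j - 1) t * charlier s j t)"
        by (cases j) auto
    qed
    ultimately show ?thesis by simp
  qed
  have "(\<lambda>j. -t * (exp_term t j * (charlier r j t * charlier s j t))) sums (-t * charlier_ip t r s)"
    unfolding charlier_ip_def by (intro sums_mult summable_sums summable_charlier_ip t)
  from sums_add[OF this shifted]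
  have "(\<lambda>j. exp_term t j * (charlier (Suc r) j t * charlier s j t))
      sums (-t * charlier_ip t r s + t * (\<Sum>m. exp_term t m * ?f m))"
    by (simp add: charlier_Suc algebra_simps)
  then have "charlier_ip t (Suc r) s = -t * charlier_ip t r s + t * (\<Sum>m. exp_term t m * ?f m)"
    unfolding charlier_ip_def by (rule sums_unique[symmetric])
  moreover have "(\<Sum>m. exp_term t m * ?f m) = charlier_ip t r s + real s * charlier_ip t r (s - 1)"
  proof -
    have "(\<Sum>m. exp_term t m * ?f m) = (\<Sum>m. exp_term t m * (charlier r m t * charlier s m t)
        + real s * (exp_term t m * (charlier r m t * charlier (s - 1) m t)))"
      by (simp add: charlier_Suc_right algebra_simps)
    also have "\<dots> = charlier_ip t r s + real s * charlier_ip t r (s - 1)"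
      unfolding charlier_ip_def using summable_charlier_ip[OF t]
      by (subst suminf_add[symmetric]) (auto intro!: summable_mult simp: suminf_mult)
    finally show ?thesis .
  qed
  ultimately show ?thesis
    by (simp add: algebra_simps)
qed

lemma charlier_ip_orthogonal:
  assumes t: "t \<ge> 0"
  shows "charlier_ip t r s = (if r = s then fact r * t^r * exp t else 0)"
proof (induction r arbitrary: s)
  case 0
  show ?case
    using charlier_ip_Suc[OF t, of _ 0]
    by (cases s) (simp_all add: charlier_ip_0_0 charlier_ip_commute)
next
  case (Suc r)
  show ?case
    using charlier_ip_Suc[OF t, of r s] Suc.IH
    by (cases s) (simp_all add: algebra_simps)
qed

lemma sums_exp_term_charlier_sq:
  assumes "t \<ge> 0"
  shows "(\<lambda>j. exp_term t j * (charlier r j t)^2) sums (fact r * t^r * exp t)"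
  using summable_sums[OF summable_charlier_ip[OF assms, of r r]] charlier_ip_orthogonal[OF assms, of r r]
  by (simp add: charlier_ip_def power2_eq_square)

lemma sums_exp_term_charlier_var:
  assumes t: "t \<ge> 0"
  shows "(\<lambda>j. exp_term t j * ((real j - t - real r) * charlier r j t)^2)
      sums (fact r * (2 * real r + 1) * t^Suc r * exp t)"
proof -
  let ?a = "\<lambda>j. charlier (Suc r) j t" and ?b = "\<lambda>j. charlier (r - 1) j t"
  have "(\<lambda>j. exp_term t j * (?a j * ?a j) + 2 * (real r * t) * (exp_term t j * (?a j * ?b j))
        + (real r * t)^2 * (exp_term t j * (?b j * ?b j)))
      sums (charlier_ip t (Suc r) (Suc r) + 2 * (real r * t) * charlier_ip t (Suc r) (r - 1)
        + (real r * t)^2 * charlier_ip t (r - 1) (r - 1))"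
    unfolding charlier_ip_def by (intro sums_add sums_mult summable_sums summable_charlier_ip t)
  moreover have "(\<lambda>j. exp_term t j * (?a j * ?a j) + 2 * (real r * t) * (exp_term t j * (?a j * ?b j))
        + (real r * t)^2 * (exp_term t j * (?b j * ?b j)))
      = (\<lambda>j. exp_term t j * ((real j - t - real r) * charlier r j t)^2)"
    by (rule ext) (subst charlier_three_term, simp add: power2_eq_square algebra_simps)
  moreover have "charlier_ip t (Suc r) (Suc r) + 2 * (real r * t) * charlier_ip t (Suc r) (r - 1)
        + (real r * t)^2 * charlier_ip t (r - 1) (r - 1) = fact r * (2 * real r + 1) * t^Suc r * exp t"
    by (cases r) (simp_all add: charlier_ip_orthogonal[OF t] power2_eq_square algebra_simps)
  ultimately show ?thesis
    by simp
qed

lemma alternating_binomial_sum_Suc: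
  fixes X :: "nat \<Rightarrow> 'a::comm_ring_1"
  shows "(\<Sum>l\<le>Suc r. (-1)^l * of_nat (Suc r choose l) * X l)
       = (\<Sum>l\<le>r. (-1)^l * of_nat (r choose l) * (X l - X (Suc l)))"
proof -
  have shift: "(\<Sum>l\<le>r. (-1)^l * of_nat (r choose l) * X l)
      = X 0 + (\<Sum>l\<le>r. (-1)^Suc l * of_nat (r choose Suc l) * X (Suc l))"
  proof -
    have "(\<Sum>l\<le>r. (-1)^l * of_nat (r choose l) * X l)
        = (\<Sum>l\<le>Suc r. (-1)^l * of_nat (r choose l) * X l)"
      by (simp add: binomial_eq_0)
    also have "\<dots> = X 0 + (\<Sum>l\<le>r. (-1)^Suc l * of_nat (r choose Suc l) * X (Suc l))"
      by (subst sum.atMost_Suc_shift) simp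
    finally show ?thesis .
  qed
  have "(\<Sum>l\<le>r. (-1)^l * of_nat (r choose l) * (X l - X (Suc l)))
      = (\<Sum>l\<le>r. (-1)^l * of_nat (r choose l) * X l)
        + (\<Sum>l\<le>r. (-1)^Suc l * of_nat (r choose l) * X (Suc l))"
    by (simp add: sum.distrib[symmetric] algebra_simps)
  also have "\<dots> = X 0 + (\<Sum>l\<le>r. (-1)^Suc l * (of_nat (r choose l) + of_nat (r choose Suc l)) * X (Suc l))"
    unfolding shift by (simp add: sum.distrib[symmetric] algebra_simps)
  also have "\<dots> = (\<Sum>l\<le>Suc r. (-1)^l * of_nat (Suc r choose l) * X l)"
    by (subst sum.atMost_Suc_shift) simp
  finally show ?thesis ..
qed

lemma ffact_fact_diff_Suc:
  assumes "l \<le> j" "k \<le> r"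
  shows "ffact j l * fact (j + Suc r - k - l) - ffact j (Suc l) * fact (j + r - k - l)
       = real (Suc r - k) * (ffact j l * fact (j + r - k - l))"
proof -
  define n where "n = j + r - k - l"
  have shift: "j + Suc r - k - l = Suc n"
    using assms by (simp add: n_def)
  have factor: "real (Suc r - k) = real (Suc n) - (real j - real l)"
    using assms by (simp add: n_def of_nat_diff)
  show ?thesis
    unfolding n_def[symmetric] shift factor ffact_Suc_right by (simp add: algebra_simps)
qed
lemma alternating_ffact_sum_Suc:
  assumes "k \<le> r"
  shows "(\<Sum>l\<le>Suc r. (-1)^l * real (Suc r choose l) * ffact j l * fact (j + Suc r - k - l))
       = real (Suc r - k) * (\<Sum>l\<le>r. (-1)^l * real (r choose l) * ffact j l * fact (j + r - k - l))"
proof -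
  have "(\<Sum>l\<le>Suc r. (-1)^l * real (Suc r choose l) * ffact j l * fact (j + Suc r - k - l))
      = (\<Sum>l\<le>r. (-1)^l * real (r choose l)
          * (ffact j l * fact (j + Suc r - k - l) - ffact j (Suc l) * fact (j + Suc r - k - Suc l)))"
    using alternating_binomial_sum_Suc[of r "\<lambda>l. ffact j l * fact (j + Suc r - k - l)"]
    by (simp add: mult.assoc)
  also have "\<dots> = (\<Sum>l\<le>r. real (Suc r - k) * ((-1)^l * real (r choose l) * ffact j l * fact (j + r - k - l)))"
  proof (rule sum.cong)
    fix l
    show "(-1)^l * real (r choose l)
          * (ffact j l * fact (j + Suc r - k - l) - ffact j (Suc l) * fact (j + Suc r - k - Suc l))
        = real (Suc r - k) * ((-1)^l * real (r choose l) * ffact j l * fact (j + r - k - l))"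
      using ffact_fact_diff_Suc[OF _ assms, of l j]
      by (cases "l \<le> j") (simp_all add: ffact_eq_0 algebra_simps)
  qed simp
  finally show ?thesis
    by (simp add: sum_distrib_left)
qed

lemma alternating_ffact_sum:
  assumes "k \<le> j" "k \<le> r"
  shows "(\<Sum>l\<le>r. (-1)^l * real (r choose l) * ffact j l * fact (j + r - k - l))
       = (if k = 0 then fact j * fact r else 0)"
  using assms(2)
proof (induction r rule: dec_induct)
  case base
  have "(\<Sum>l\<le>k. (-1)^l * real (k choose l) * ffact j l * fact (j + k - k - l))
      = (\<Sum>l\<le>k. (-1)^l * real (k choose l)) * fact j"
    unfolding sum_distrib_right
    by (rule sum.cong) (use assms in \<open>simp_all add: mult.assoc ffact_mult_fact\<close>)
  also have "\<dots> = (if k = 0 then fact j * fact k else 0)"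
    using choose_alternating_sum[of k, where 'a=real] by auto
  finally show ?case .
next
  case (step r)
  then show ?case
    using alternating_ffact_sum_Suc[OF step(1), of j] by (auto simp: Suc_diff_le)
qed

lemma minus_one_power_diff:
  assumes "l \<le> r"
  shows "(-1::real)^(r - l) = (-1)^r * (-1)^l"
proof -
  have "(-1::real)^r = (-1)^(r - l) * (-1)^l"
    using assms by (simp flip: power_add)
  then have "(-1::real)^r * (-1)^l = (-1)^(r - l) * ((-1)^l * (-1)^l)"
    by (simp add: mult.assoc)
  also have "(-1::real)^l * (-1)^l = 1"
    by (simp flip: power_add)
  finally show ?thesis
    by simp
qed

definition charlier_coeff :: "nat \<Rightarrow> nat \<Rightarrow> nat \<Rightarrow> real" where
  "charlier_coeff r j k = (-1)^(r - k) * real (r choose k) * ffact j k"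

lemma charlier_eq_coeff: "charlier r j t = (\<Sum>k\<le>r. charlier_coeff r j k * t^(r - k))"
  unfolding charlier_def charlier_coeff_def by (intro sum.cong refl) (simp add: power_minus[of t])

lemma charlier_coeff_double_sum:
  "(\<Sum>k\<le>r. \<Sum>l\<le>r. charlier_coeff r j k * charlier_coeff r j l * fact (j + r - k - l)) = fact j * fact r"
proof -
  have inner: "(\<Sum>l\<le>r. charlier_coeff r j k * charlier_coeff r j l * fact (j + r - k - l))
      = (if k = 0 then fact j * fact r else 0)" if k: "k \<le> r" for k
  proof (cases "k \<le> j")
    case True
    have "(\<Sum>l\<le>r. charlier_coeff r j k * charlier_coeff r j l * fact (j + r - k - l))
        = (charlier_coeff r j k * (-1)^r)
          * (\<Sum>l\<le>r. (-1)^l * real (r choose l) * ffact j l * fact (j + r - k - l))"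
      unfolding sum_distrib_left
      by (rule sum.cong) (auto simp: charlier_coeff_def minus_one_power_diff algebra_simps)
    then show ?thesis
      using alternating_ffact_sum[OF True k] by (simp add: charlier_coeff_def)
  qed (simp add: charlier_coeff_def ffact_eq_0)
  have "(\<Sum>k\<le>r. \<Sum>l\<le>r. charlier_coeff r j k * charlier_coeff r j l * fact (j + r - k - l))
      = (\<Sum>k\<le>r. if k = 0 then fact j * fact r else 0)"
    by (rule sum.cong[OF refl]) (rule inner, simp)
  then show ?thesis
    by simp
qed

section \<open>The radial densities\<close>

text \<open>\<open>hermite_density r j (\<pi>|z|\<^sup>2) = exp (-\<pi>|z|\<^sup>2) |H\<^sub>j\<^sub>,\<^sub>r(z)|\<^sup>2\<close>, see \<open>norm_cHermite_sq\<close>.\<close>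

definition hermite_density :: "nat \<Rightarrow> nat \<Rightarrow> real \<Rightarrow> real" where
  "hermite_density r j t = exp (-t) * exp_term t j * (charlier r j t)^2 / (t^r * fact r)"

lemma hermite_density_nonneg: "t \<ge> 0 \<Longrightarrow> hermite_density r j t \<ge> 0"
  by (simp add: hermite_density_def exp_term_def)

lemma hermite_density_measurable [measurable]: "(\<lambda>t. hermite_density r j t) \<in> borel_measurable borel"
  unfolding hermite_density_def exp_term_def charlier_def by measurable

lemma sums_hermite_density:
  assumes t: "t > 0"
  shows "(\<lambda>j. hermite_density r j t) sums 1"
proof -
  have "(\<lambda>j. (exp (-t) / (t^r * fact r)) * (exp_term t j * (charlier r j t)^2))
      sums ((exp (-t) / (t^r * fact r)) * (fact r * t^r * exp t))"
    using t by (intro sums_mult sums_exp_term_charlier_sq) auto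
  moreover have "(exp (-t) / (t^r * fact r)) * (fact r * t^r * exp t) = 1"
    using t by (simp add: exp_minus field_simps)
  ultimately show ?thesis
    by (simp add: hermite_density_def mult.assoc)
qed

lemma sums_hermite_density_variance:
  assumes t: "t > 0"
  shows "(\<lambda>j. hermite_density r j t * (real j - t - real r)^2) sums ((2 * real r + 1) * t)"
proof -
  have "(\<lambda>j. (exp (-t) / (t^r * fact r)) * (exp_term t j * ((real j - t - real r) * charlier r j t)^2))
      sums ((exp (-t) / (t^r * fact r)) * (fact r * (2 * real r + 1) * t^Suc r * exp t))"
    using t by (intro sums_mult sums_exp_term_charlier_var) auto
  moreover have "(exp (-t) / (t^r * fact r)) * (fact r * (2 * real r + 1) * t^Suc r * exp t)
      = (2 * real r + 1) * t"
    using t by (simp add: exp_minus field_simps)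
  moreover have "(\<lambda>j. (exp (-t) / (t^r * fact r)) * (exp_term t j * ((real j - t - real r) * charlier r j t)^2))
      = (\<lambda>j. hermite_density r j t * (real j - t - real r)^2)"
    by (rule ext) (simp add: hermite_density_def power_mult_distrib)
  ultimately show ?thesis
    by simp
qed

lemma hermite_density_expand:
  assumes t: "t > 0"
  shows "hermite_density r j t
       = (\<Sum>k\<le>r. \<Sum>l\<le>r. charlier_coeff r j k * charlier_coeff r j l * (t^(j + r - k - l) * exp (-t)))
         / (fact j * fact r)"
proof -
  let ?c = "charlier_coeff r j"
  define a where "a k = ?c k * t^(r - k)" for k
  have power_terms: "t^j * (a k * a l) = ?c k * ?c l * t^(j + r - k - l) * t^r"
    if "k \<le> r" "l \<le> r" for k l
  proof (cases "k \<le> j \<and> l \<le> j")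
    case True
    then have "j + (r - k) + (r - l) = (j + r - k - l) + r"
      using that by auto
    then have "t^j * t^(r - k) * t^(r - l) = t^(j + r - k - l) * t^r"
      by (simp flip: power_add)
    then show ?thesis
      by (simp add: a_def algebra_simps)
  qed (auto simp: a_def charlier_coeff_def ffact_eq_0)
  have "t^j * (charlier r j t)^2 = t^j * (sum a {..r} * sum a {..r})"
    by (simp add: charlier_eq_coeff a_def power2_eq_square)
  also have "\<dots> = (\<Sum>k\<le>r. \<Sum>l\<le>r. t^j * (a k * a l))"
    by (simp only: sum_product) (simp only: sum_distrib_left)
  also have "\<dots> = (\<Sum>k\<le>r. \<Sum>l\<le>r. ?c k * ?c l * t^(j + r - k - l)) * t^r"
    by (simp add: power_terms sum_distrib_right)
  finally have sq: "t^j * (charlier r j t)^2 = (\<Sum>k\<le>r. \<Sum>l\<le>r. ?c k * ?c l * t^(j + r - k - l)) * t^r" .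
  have "hermite_density r j t = exp (-t) * (t^j * (charlier r j t)^2) / (t^r * (fact j * fact r))"
    by (simp add: hermite_density_def exp_term_def mult_ac)
  also have "\<dots> = exp (-t) * (\<Sum>k\<le>r. \<Sum>l\<le>r. ?c k * ?c l * t^(j + r - k - l)) / (fact j * fact r)"
    using t by (simp add: sq mult_ac)
  also have "exp (-t) * (\<Sum>k\<le>r. \<Sum>l\<le>r. ?c k * ?c l * t^(j + r - k - l))
      = (\<Sum>k\<le>r. \<Sum>l\<le>r. ?c k * ?c l * (t^(j + r - k - l) * exp (-t)))"
    by (simp add: sum_distrib_left mult_ac)
  finally show ?thesis .
qed

lemma has_integral_power_mult_exp_neg: "((\<lambda>t::real. t^n * exp (-t)) has_integral fact n) {0<..}"
proof -
  have "((\<lambda>t. t powr (real (Suc n) - 1) / exp t) has_integral Gamma (real (Suc n))) {0..}"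
    by (rule Gamma_integral_real) simp
  moreover have "Gamma (real (Suc n)) = fact n"
    using Gamma_fact[of n, where 'a=real] by (simp add: add.commute)
  ultimately have "((\<lambda>t. t powr (real n) / exp t) has_integral fact n) {0<..}"
    by (subst has_integral_spike_set_eq[of _ "{0..}"]) (auto intro: negligible_subset[of "{0}"])
  then show ?thesis
    by (rule has_integral_eq[rotated]) (simp add: powr_realpow exp_minus field_simps)
qed

lemma has_integral_hermite_density: "((\<lambda>t. hermite_density r j t) has_integral 1) {0<..}"
proof -
  let ?c = "charlier_coeff r j"
  let ?f = "\<lambda>t. (\<Sum>k\<le>r. \<Sum>l\<le>r. ?c k * ?c l * (t^(j + r - k - l) * exp (-t))) / (fact j * fact r)"
  have "(?f has_integral ((\<Sum>k\<le>r. \<Sum>l\<le>r. ?c k * ?c l * fact (j + r - k - l)) / (fact j * fact r))) {0<..}"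
    by (intro has_integral_divide has_integral_sum finite_atMost has_integral_mult_right
        has_integral_power_mult_exp_neg)
  then have "(?f has_integral 1) {0<..}"
    unfolding charlier_coeff_double_sum by simp
  then show ?thesis
    by (rule has_integral_eq[rotated]) (simp add: hermite_density_expand)
qed

lemma nn_integral_hermite_density:
  "(\<integral>\<^sup>+t. ennreal (indicator {0<..} t * hermite_density r j t) \<partial>lborel) = 1"
  using nn_integral_has_integral_lebesgue[OF _ has_integral_hermite_density, of r j]
    hermite_density_nonneg by simp

definition radial_intensity :: "nat \<Rightarrow> nat \<Rightarrow> real \<Rightarrow> real" where
  "radial_intensity r N t = (\<Sum>j<N. hermite_density r j t)"

lemma radial_intensity_measurable [measurable]: "(\<lambda>t. radial_intensity r N t) \<in> borel_measurable borel"
  unfolding radial_intensity_def by measurable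

lemma radial_intensity_nonneg: "t \<ge> 0 \<Longrightarrow> radial_intensity r N t \<ge> 0"
  unfolding radial_intensity_def by (intro sum_nonneg hermite_density_nonneg)

lemma radial_intensity_le_1:
  assumes "t > 0"
  shows "radial_intensity r N t \<le> 1"
proof -
  have "(\<Sum>j<N. hermite_density r j t) \<le> (\<Sum>j. hermite_density r j t)"
    using sums_hermite_density[OF assms] assms
    by (intro sum_le_suminf) (auto intro: sums_summable hermite_density_nonneg)
  then show ?thesis
    using sums_unique[OF sums_hermite_density[OF assms]] by (simp add: radial_intensity_def)
qed

text \<open>Chebyshev's inequality for the distribution \<open>j \<mapsto> hermite_density r j t\<close>.\<close>

lemma one_minus_radial_intensity_le:
  assumes t: "t > 0" and N: "real N > t + real r"
  shows "1 - radial_intensity r N t \<le> (2 * real r + 1) * t / (real N - t - real r)^2"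
proof -
  define D where "D = (real N - t - real r)^2"
  have D: "D > 0"
    using N by (simp add: D_def)
  have tail: "(\<lambda>j. hermite_density r j t - (if j \<in> {..<N} then hermite_density r j t else 0))
      sums (1 - radial_intensity r N t)"
    unfolding radial_intensity_def by (intro sums_diff sums_hermite_density t sums_If_finite_set) simp
  have "hermite_density r j t - (if j \<in> {..<N} then hermite_density r j t else 0)
      \<le> hermite_density r j t * (real j - t - real r)^2 / D" for j
  proof (cases "j < N")
    case False
    then have "D \<le> (real j - t - real r)^2"
      unfolding D_def using N by (intro power_mono) auto
    then have "hermite_density r j t * 1 \<le> hermite_density r j t * ((real j - t - real r)^2 / D)"
      using D t by (intro mult_left_mono hermite_density_nonneg) auto
    then show ?thesis
      using False by simp
  qed (use hermite_density_nonneg[of t r j] t D in simp)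
  from sums_le[OF this tail sums_divide[OF sums_hermite_density_variance[OF t], where c=D]]
  show ?thesis
    by (simp add: D_def)
qed

lemma nn_integral_radial_intensity:
  "(\<integral>\<^sup>+t. ennreal (indicator {0<..} t * radial_intensity r N t) \<partial>lborel) = real N"
proof -
  have "(\<integral>\<^sup>+t. ennreal (indicator {0<..} t * radial_intensity r N t) \<partial>lborel)
      = (\<integral>\<^sup>+t. (\<Sum>j<N. ennreal (indicator {0<..} t * hermite_density r j t)) \<partial>lborel)"
    by (intro nn_integral_cong, subst sum_ennreal)
      (auto simp: radial_intensity_def sum_distrib_left indicator_def intro: hermite_density_nonneg)
  also have "\<dots> = (\<Sum>j<N. (\<integral>\<^sup>+t. ennreal (indicator {0<..} t * hermite_density r j t) \<partial>lborel))"
    by (rule nn_integral_sum) measurable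
  also have "\<dots> = real N"
    by (simp add: nn_integral_hermite_density ennreal_of_nat_eq_real_of_nat)
  finally show ?thesis .
qed

section \<open>The \<open>L\<^sup>1\<close> estimate in the radial variable\<close>

lemma nn_integral_ennreal_add:
  fixes f g :: "'a \<Rightarrow> real"
  assumes [measurable]: "f \<in> borel_measurable M" "g \<in> borel_measurable M"
    and "\<And>x. 0 \<le> f x" "\<And>x. 0 \<le> g x"
  shows "(\<integral>\<^sup>+x. ennreal (f x + g x) \<partial>M) = (\<integral>\<^sup>+x. ennreal (f x) \<partial>M) + (\<integral>\<^sup>+x. ennreal (g x) \<partial>M)"
proof -
  have "(\<integral>\<^sup>+x. ennreal (f x + g x) \<partial>M) = (\<integral>\<^sup>+x. ennreal (f x) + ennreal (g x) \<partial>M)"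
    using assms(3,4) by (intro nn_integral_cong) (simp add: ennreal_plus)
  also have "\<dots> = (\<integral>\<^sup>+x. ennreal (f x) \<partial>M) + (\<integral>\<^sup>+x. ennreal (g x) \<partial>M)"
    by (rule nn_integral_add) measurable
  finally show ?thesis .
qed

text \<open>If \<open>0 \<le> f \<le> 1\<close> on \<open>S \<supseteq> A\<close> and \<open>f\<close> has the same finite mass as \<open>A\<close>, then the surplus
  of \<open>f\<close> outside \<open>A\<close> equals its deficit inside \<open>A\<close>.\<close>

lemma nn_integral_abs_diff_indicator:
  fixes f :: "'a \<Rightarrow> real"
  assumes [measurable]: "f \<in> borel_measurable M" "S \<in> sets M" "A \<in> sets M"
    and "A \<subseteq> S" and f01: "\<And>x. x \<in> S \<Longrightarrow> 0 \<le> f x \<and> f x \<le> 1"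
    and mass: "(\<integral>\<^sup>+x. ennreal (indicator S x * f x) \<partial>M) = emeasure M A"
    and finite: "emeasure M A \<noteq> \<infinity>"
  shows "(\<integral>\<^sup>+x. ennreal (indicator S x * \<bar>f x - indicator A x\<bar>) \<partial>M)
       = 2 * (\<integral>\<^sup>+x. ennreal (indicator A x * (1 - f x)) \<partial>M)"
proof -
  define u where "u x = indicator A x * (1 - f x)" for x
  define v where "v x = indicator (S - A) x * f x" for x
  define w where "w x = indicator A x * f x" for x
  have meas: "u \<in> borel_measurable M" "v \<in> borel_measurable M" "w \<in> borel_measurable M"
    unfolding u_def[abs_def] v_def[abs_def] w_def[abs_def] by simp_all
  have nonneg: "0 \<le> u x" "0 \<le> v x" "0 \<le> w x" for x
    using f01[of x] \<open>A \<subseteq> S\<close> by (auto simp: u_def v_def w_def indicator_def)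
  have split_abs: "indicator S x * \<bar>f x - indicator A x\<bar> = u x + v x"
    and split_S: "indicator S x * f x = w x + v x"
    and split_A: "indicator A x = w x + u x" for x
    using f01[of x] \<open>A \<subseteq> S\<close> by (auto simp: u_def v_def w_def indicator_def)
  have uv: "(\<integral>\<^sup>+x. ennreal (u x + v x) \<partial>M) = (\<integral>\<^sup>+x. ennreal (u x) \<partial>M) + (\<integral>\<^sup>+x. ennreal (v x) \<partial>M)"
    and wv: "(\<integral>\<^sup>+x. ennreal (w x + v x) \<partial>M) = (\<integral>\<^sup>+x. ennreal (w x) \<partial>M) + (\<integral>\<^sup>+x. ennreal (v x) \<partial>M)"
    and wu: "(\<integral>\<^sup>+x. ennreal (w x + u x) \<partial>M) = (\<integral>\<^sup>+x. ennreal (w x) \<partial>M) + (\<integral>\<^sup>+x. ennreal (u x) \<partial>M)"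
    by (rule nn_integral_ennreal_add; simp add: meas nonneg)+
  have mass_wv: "(\<integral>\<^sup>+x. ennreal (w x) \<partial>M) + (\<integral>\<^sup>+x. ennreal (v x) \<partial>M) = emeasure M A"
    using mass unfolding split_S wv .
  have mass_wu: "(\<integral>\<^sup>+x. ennreal (w x) \<partial>M) + (\<integral>\<^sup>+x. ennreal (u x) \<partial>M) = emeasure M A"
    unfolding wu[symmetric] split_A[symmetric] by (simp add: ennreal_indicator)
  have "(\<integral>\<^sup>+x. ennreal (w x) \<partial>M) \<noteq> \<infinity>"
    using mass_wv finite by auto
  moreover have "(\<integral>\<^sup>+x. ennreal (w x) \<partial>M) + (\<integral>\<^sup>+x. ennreal (v x) \<partial>M)
      = (\<integral>\<^sup>+x. ennreal (w x) \<partial>M) + (\<integral>\<^sup>+x. ennreal (u x) \<partial>M)"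
    using mass_wv mass_wu by simp
  ultimately have "(\<integral>\<^sup>+x. ennreal (v x) \<partial>M) = (\<integral>\<^sup>+x. ennreal (u x) \<partial>M)"
    by (simp add: ennreal_add_left_cancel)
  then show ?thesis
    unfolding split_abs uv by (simp add: u_def mult_2)
qed

lemma nn_integral_const_div_square_le:
  fixes a b K :: real
  assumes a: "a \<ge> 0" and ba: "b - a > 0" and K: "K \<ge> 0"
  shows "(\<integral>\<^sup>+t. ennreal (indicator {0..a} t * (K / (b - t)^2)) \<partial>lborel) \<le> ennreal (K / (b - a))"
proof -
  have "((\<lambda>t. K / (b - t)) has_vector_derivative (K / (b - t)^2)) (at t within {0..a})"
    if "t \<in> {0..a}" for t
    using that ba
    by (auto intro!: derivative_eq_intros
        simp: has_real_derivative_iff_has_vector_derivative[symmetric] power2_eq_square field_simps)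
  from fundamental_theorem_of_calculus[OF a this]
  have "(\<integral>\<^sup>+t. ennreal (indicator {0..a} t * (K / (b - t)^2)) \<partial>lborel) = ennreal (K / (b - a) - K / b)"
    by (intro nn_integral_has_integral_lebesgue) (use K in auto)
  also have "\<dots> \<le> ennreal (K / (b - a))"
    using K ba a by (intro ennreal_leI) auto
  finally show ?thesis .
qed

lemma radial_deficit_le_majorant:
  assumes "s > 0" and "a = real N - real r - s"
  shows "indicator {0<..<real N} t * (1 - radial_intensity r N t)
       \<le> indicator {0..a} t * ((2 * real r + 1) * real N / (real N - real r - t)^2) + indicator {a..real N} t"
proof (cases "t \<in> {0<..<real N} \<and> t \<le> a")
  case True
  then have "1 - radial_intensity r N t \<le> (2 * real r + 1) * t / (real N - t - real r)^2"
    using assms by (intro one_minus_radial_intensity_le) auto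
  also have "\<dots> = (2 * real r + 1) * t / (real N - real r - t)^2"
    by (simp add: algebra_simps)
  also have "\<dots> \<le> (2 * real r + 1) * real N / (real N - real r - t)^2"
    using True by (intro divide_right_mono mult_left_mono) auto
  finally show ?thesis
    using True by (auto simp: indicator_def)
next
  case False
  then show ?thesis
    using radial_intensity_nonneg[of t r N] by (auto simp: indicator_def)
qed

text \<open>Below \<open>a = N - r - \<surd>N\<close> Chebyshev's bound is integrable with integral \<open>O(\<surd>N)\<close>;
  on \<open>[a, N]\<close> the deficit is at most \<open>1\<close>.\<close>

lemma nn_integral_radial_deficit_le:
  assumes N: "N \<ge> 1"
  shows "(\<integral>\<^sup>+t. ennreal (indicator {0<..<real N} t * (1 - radial_intensity r N t)) \<partial>lborel)
       \<le> ennreal ((3 * real r + 2) * sqrt (real N))"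
proof -
  define s where "s = sqrt (real N)"
  define a where "a = real N - real r - s"
  define K where "K = (2 * real r + 1) * real N"
  have s1: "s \<ge> 1" and sN: "s * s = real N" and K: "K \<ge> 0"
    using N by (simp_all add: s_def K_def)
  have pointwise: "indicator {0<..<real N} t * (1 - radial_intensity r N t)
      \<le> indicator {0..a} t * (K / (real N - real r - t)^2) + indicator {a..real N} t" for t
    using radial_deficit_le_majorant[of s a N r t] s1 by (simp add: a_def K_def)
  have "(\<integral>\<^sup>+t. ennreal (indicator {0<..<real N} t * (1 - radial_intensity r N t)) \<partial>lborel)
      \<le> (\<integral>\<^sup>+t. ennreal (indicator {0..a} t * (K / (real N - real r - t)^2) + indicator {a..real N} t) \<partial>lborel)"
    by (intro nn_integral_mono ennreal_leI pointwise)
  also have "\<dots> = (\<integral>\<^sup>+t. ennreal (indicator {0..a} t * (K / (real N - real r - t)^2)) \<partial>lborel)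
      + (\<integral>\<^sup>+t. ennreal (indicator {a..real N} t) \<partial>lborel)"
    using K by (intro nn_integral_ennreal_add) auto
  also have "\<dots> \<le> ennreal ((2 * real r + 1) * s) + ennreal (real r + s)"
  proof (intro add_mono)
    show "(\<integral>\<^sup>+t. ennreal (indicator {0..a} t * (K / (real N - real r - t)^2)) \<partial>lborel)
        \<le> ennreal ((2 * real r + 1) * s)"
    proof (cases "a \<ge> 0")
      case True
      have "K / (real N - real r - a) = (2 * real r + 1) * s"
        using s1 sN by (simp add: a_def K_def field_simps)
      then show ?thesis
        using nn_integral_const_div_square_le[OF True _ K, of "real N - real r"] s1
        by (simp add: a_def)
    qed (simp add: indicator_def)
    show "(\<integral>\<^sup>+t. ennreal (indicator {a..real N} t) \<partial>lborel) \<le> ennreal (real r + s)"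
      using s1 by (simp add: ennreal_indicator a_def)
  qed
  also have "\<dots> = ennreal ((2 * real r + 1) * s + (real r + s))"
    using s1 by (simp add: ennreal_plus)
  also have "\<dots> \<le> ennreal ((3 * real r + 2) * sqrt (real N))"
  proof (rule ennreal_leI)
    have "real r \<le> real r * s"
      using s1 by (simp add: mult_le_cancel_left1)
    then show "(2 * real r + 1) * s + (real r + s) \<le> (3 * real r + 2) * sqrt (real N)"
      by (simp add: s_def[symmetric] algebra_simps)
  qed
  finally show ?thesis .
qed

lemma nn_integral_radial_error_le:
  "(\<integral>\<^sup>+t. indicator {0..} t * ennreal \<bar>radial_intensity r N t - indicator {..<real N} t\<bar> \<partial>lborel)
     \<le> ennreal ((6 * real r + 4) * sqrt (real N))"
proof (cases "N = 0")
  case True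
  then have zero: "indicator {0..} t * ennreal \<bar>radial_intensity r N t - indicator {..<real N} t\<bar> = 0" for t
    by (simp add: radial_intensity_def indicator_def)
  have "(\<integral>\<^sup>+t. indicator {0..} t * ennreal \<bar>radial_intensity r N t - indicator {..<real N} t\<bar> \<partial>lborel)
      = (\<integral>\<^sup>+t. 0 \<partial>(lborel :: real measure))"
    by (rule nn_integral_cong) (rule zero)
  then show ?thesis
    by simp
next
  case False
  have "(\<integral>\<^sup>+t. indicator {0..} t * ennreal \<bar>radial_intensity r N t - indicator {..<real N} t\<bar> \<partial>lborel)
      = (\<integral>\<^sup>+t. ennreal (indicator {0<..} t * \<bar>radial_intensity r N t - indicator {0<..<real N} t\<bar>) \<partial>lborel)"
    by (intro nn_integral_cong_AE eventually_mono[OF AE_lborel_singleton[of 0]])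
      (auto simp: indicator_def)
  also have "\<dots> = 2 * (\<integral>\<^sup>+t. ennreal (indicator {0<..<real N} t * (1 - radial_intensity r N t)) \<partial>lborel)"
    by (rule nn_integral_abs_diff_indicator)
      (auto simp: radial_intensity_nonneg radial_intensity_le_1 nn_integral_radial_intensity)
  also have "\<dots> \<le> 2 * ennreal ((3 * real r + 2) * sqrt (real N))"
    using False by (intro mult_left_mono nn_integral_radial_deficit_le) auto
  also have "\<dots> = ennreal (2 * ((3 * real r + 2) * sqrt (real N)))"
    by (simp add: ennreal_mult)
  also have "\<dots> = ennreal ((6 * real r + 4) * sqrt (real N))"
    by (rule arg_cong[where f=ennreal]) (simp add: algebra_simps)
  finally show ?thesis .
qed

section \<open>The intensity in polar coordinates\<close>

lemma charlier_eq_laguerre: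
  assumes "r \<le> j"
  shows "charlier r j t = fact r * laguerre r (j - r) t"
proof -
  have "charlier r j t = (\<Sum>i=0..r. real (r choose (r - i)) * ffact j (r - i) * (-t)^(r - (r - i)))"
    unfolding charlier_def atMost_atLeast0 by (subst sum.atLeastAtMost_rev) simp
  also have "\<dots> = (\<Sum>i=0..r. fact r * ((-1)^i * real (j choose (r - i)) * t^i / fact i))"
  proof (rule sum.cong)
    fix i assume "i \<in> {0..r}"
    then have i: "i \<le> r" by simp
    have "real (r choose (r - i)) * fact (r - i) * fact i = fact r"
      using ffact_mult_fact[of "r - i" r] i by (simp add: ffact_def)
    then show "real (r choose (r - i)) * ffact j (r - i) * (-t)^(r - (r - i))
        = fact r * ((-1)^i * real (j choose (r - i)) * t^i / fact i)"
      using i by (simp add: ffact_def power_minus[of t] field_simps)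
  qed simp
  also have "\<dots> = fact r * laguerre r (j - r) t"
    using assms by (simp add: laguerre_def sum_distrib_left)
  finally show ?thesis .
qed

lemma charlier_eq_power_laguerre:
  assumes "j \<le> r"
  shows "charlier r j t = (-1)^(r - j) * fact j * t^(r - j) * laguerre j (r - j) t"
proof -
  have "charlier r j t = (\<Sum>k=0..j. real (r choose k) * ffact j k * (-t)^(r - k))"
    unfolding charlier_def atMost_atLeast0
    by (rule sum.mono_neutral_right) (use assms in \<open>auto simp: ffact_eq_0\<close>)
  also have "\<dots> = (\<Sum>i=0..j. real (r choose (j - i)) * ffact j (j - i) * (-t)^(r - (j - i)))"
    by (subst sum.atLeastAtMost_rev) simp
  also have "\<dots> = (\<Sum>i=0..j. (-1)^(r - j) * fact j * t^(r - j)
      * ((-1)^i * real (r choose (j - i)) * t^i / fact i))"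
  proof (rule sum.cong)
    fix i assume "i \<in> {0..j}"
    then have i: "i \<le> j" by simp
    have "ffact j (j - i) * fact i = fact j"
      using ffact_mult_fact[of "j - i" j] i by simp
    moreover have "r - (j - i) = (r - j) + i"
      using i assms by simp
    ultimately show "real (r choose (j - i)) * ffact j (j - i) * (-t)^(r - (j - i))
        = (-1)^(r - j) * fact j * t^(r - j) * ((-1)^i * real (r choose (j - i)) * t^i / fact i)"
      by (simp add: power_minus[of t] power_add field_simps)
  qed simp
  also have "\<dots> = (-1)^(r - j) * fact j * t^(r - j) * laguerre j (r - j) t"
    using assms by (simp add: laguerre_def sum_distrib_left)
  finally show ?thesis .
qed

lemma powr_half_power2: "x > 0 \<Longrightarrow> (x powr (real n / 2))^2 = (x::real)^n"
  by (simp add: power2_eq_square powr_realpow flip: powr_add)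

lemma norm_cHermite_sq:
  assumes z: "z \<noteq> 0"
  shows "(cmod (cHermite j r z))^2
       = (pi * (cmod z)^2)^j * (charlier r j (pi * (cmod z)^2))^2 / ((pi * (cmod z)^2)^r * fact j * fact r)"
proof -
  define t where "t = pi * (cmod z)^2"
  have t: "t > 0"
    using z by (simp add: t_def)
  show ?thesis
  proof (cases "j > r")
    case True
    have "(cmod (cHermite j r z))^2 = (sqrt (fact r / fact j))^2 * (pi powr (real (j - r) / 2))^2
        * ((cmod z)^2)^(j - r) * (laguerre r (j - r) t)^2"
      using True by (simp add: cHermite_def t_def norm_mult norm_power power_mult_distrib abs_mult
          power_mult[symmetric] mult.commute[of 2])
    also have "\<dots> = fact r / fact j * t^(j - r) * (laguerre r (j - r) t)^2"
      by (simp add: powr_half_power2 t_def power_mult_distrib)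
    also have "t^j = t^(j - r) * t^r"
      using True by (simp flip: power_add)
    then have "fact r / fact j * t^(j - r) * (laguerre r (j - r) t)^2
        = t^j * (charlier r j t)^2 / (t^r * fact j * fact r)"
      using t True by (simp add: charlier_eq_laguerre power_mult_distrib field_simps power2_eq_square)
    finally show ?thesis
      by (simp add: t_def)
  next
    case False
    have "(cmod (cHermite j r z))^2 = (sqrt (fact j / fact r))^2 * (pi powr (real (r - j) / 2))^2
        * ((cmod z)^2)^(r - j) * (laguerre j (r - j) t)^2"
      using False by (simp add: cHermite_def t_def norm_mult norm_power power_mult_distrib abs_mult
          power_mult[symmetric] mult.commute[of 2])
    also have "\<dots> = fact j / fact r * t^(r - j) * (laguerre j (r - j) t)^2"
      by (simp add: powr_half_power2 t_def power_mult_distrib)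
    also have "t^r = t^(r - j) * t^j"
      using False by (simp flip: power_add)
    then have "fact j / fact r * t^(r - j) * (laguerre j (r - j) t)^2
        = t^j * (charlier r j t)^2 / (t^r * fact j * fact r)"
      using t False
      by (simp add: charlier_eq_power_laguerre power_mult_distrib field_simps power2_eq_square
          flip: power_add)
    finally show ?thesis
      by (simp add: t_def)
  qed
qed

lemma rho_eq_radial_intensity:
  assumes "z \<noteq> 0"
  shows "rho r N z = complex_of_real (radial_intensity r N (pi * (cmod z)^2))"
proof -
  define t where "t = pi * (cmod z)^2"
  have "exp (- (pi / 2) * ((cmod z)^2 + (cmod z)^2)) = exp (- t)"
    by (simp add: t_def)
  moreover have "cHermite j r z * cnj (cHermite j r z) = complex_of_real ((cmod (cHermite j r z))^2)" for j
    by (rule complex_norm_square[symmetric])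
  ultimately have "rho r N z = complex_of_real (exp (- t)) * (\<Sum>j<N. complex_of_real ((cmod (cHermite j r z))^2))"
    unfolding rho_def Kker_def by simp
  also have "\<dots> = complex_of_real (\<Sum>j<N. exp (- t) * (cmod (cHermite j r z))^2)"
    by (simp add: sum_distrib_left)
  also have "\<dots> = complex_of_real (radial_intensity r N t)"
    unfolding radial_intensity_def hermite_density_def exp_term_def
    by (simp add: norm_cHermite_sq[OF assms] t_def[symmetric] field_simps)
  finally show ?thesis
    by (simp add: t_def)
qed

lemma norm_rho_minus_indicator_ball:
  assumes "z \<noteq> 0"
  shows "cmod (rho r N z - complex_of_real (indicator (ball 0 (sqrt (real N / pi))) z))
       = \<bar>radial_intensity r N (pi * (cmod z)^2) - indicator {..<real N} (pi * (cmod z)^2)\<bar>"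
proof -
  have "cmod z < sqrt (real N / pi) \<longleftrightarrow> (cmod z)^2 < real N / pi"
    by (metis norm_ge_zero real_sqrt_abs abs_norm_cancel real_sqrt_less_iff)
  also have "\<dots> \<longleftrightarrow> pi * (cmod z)^2 < real N"
    by (simp add: pos_less_divide_eq mult.commute)
  finally have "cmod z < sqrt (real N / pi) \<longleftrightarrow> pi * (cmod z)^2 < real N" .
  then have "indicator (ball 0 (sqrt (real N / pi))) z = (indicator {..<real N} (pi * (cmod z)^2) :: real)"
    by (simp add: indicator_def dist_norm)
  then show ?thesis
    using assms by (simp add: rho_eq_radial_intensity flip: of_real_diff)
qed

lemma nn_integral_norm_rho_minus_indicator_le:
  "(\<integral>\<^sup>+z. ennreal (cmod (rho r N z - complex_of_real (indicator (ball 0 (sqrt (real N / pi))) z))) \<partial>lborel)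
     \<le> ennreal ((6 * real r + 4) * sqrt (real N))"
proof -
  let ?h = "\<lambda>t. ennreal \<bar>radial_intensity r N t - indicator {..<real N} t\<bar>"
  have "(\<integral>\<^sup>+z. ennreal (cmod (rho r N z - complex_of_real (indicator (ball 0 (sqrt (real N / pi))) z))) \<partial>lborel)
      = (\<integral>\<^sup>+z. ?h (pi * (cmod z)^2) \<partial>lborel)"
    by (intro nn_integral_cong_AE eventually_mono[OF AE_lborel_singleton[of 0]])
      (simp add: norm_rho_minus_indicator_ball)
  also have "\<dots> = (\<integral>\<^sup>+t. indicator {0..} t * ?h t \<partial>lborel)"
    by (rule nn_integral_pi_norm_sq) measurable
  also have "\<dots> \<le> ennreal ((6 * real r + 4) * sqrt (real N))"
    by (rule nn_integral_radial_error_le)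
  finally show ?thesis .
qed

lemma nn_integral_norm_rho_rescaled_le:
  assumes N: "N \<ge> 1"
  shows "(\<integral>\<^sup>+z. ennreal (cmod (rho r N (complex_of_real (sqrt (real N / pi)) * z)
            - complex_of_real (indicator (ball 0 1) z))) \<partial>lborel)
       \<le> ennreal (pi * (6 * real r + 4) / sqrt (real N))"
proof -
  define c where "c = real N / pi"
  have c: "c > 0"
    using N by (simp add: c_def)
  let ?h = "\<lambda>t. ennreal \<bar>radial_intensity r N t - indicator {..<real N} t\<bar>"
  have pointwise: "ennreal (cmod (rho r N (complex_of_real (sqrt c) * z) - complex_of_real (indicator (ball 0 1) z)))
      = ?h (c * (pi * (cmod z)^2))" if "z \<noteq> 0" for z
  proof -
    let ?w = "complex_of_real (sqrt c) * z"
    have w: "pi * (cmod ?w)^2 = c * (pi * (cmod z)^2)"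
      using c by (simp add: norm_mult power_mult_distrib)
    have ind: "indicator (ball 0 1) z = (indicator (ball 0 (sqrt (real N / pi))) ?w :: real)"
      using c by (simp add: indicator_def norm_mult c_def[symmetric])
    have "?w \<noteq> 0"
      using that c by simp
    then show ?thesis
      by (simp only: ind norm_rho_minus_indicator_ball[OF \<open>?w \<noteq> 0\<close>] w)
  qed
  have "(\<integral>\<^sup>+z. ennreal (cmod (rho r N (complex_of_real (sqrt c) * z)
            - complex_of_real (indicator (ball 0 1) z))) \<partial>lborel)
      = (\<integral>\<^sup>+z. ?h (c * (pi * (cmod z)^2)) \<partial>lborel)"
    by (intro nn_integral_cong_AE eventually_mono[OF AE_lborel_singleton[of 0]]) (simp add: pointwise)
  also have "\<dots> = ennreal (1 / c) * (\<integral>\<^sup>+t. indicator {0..} t * ?h t \<partial>lborel)"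
    by (rule nn_integral_pi_norm_sq_scaled[OF _ c]) measurable
  also have "\<dots> \<le> ennreal (1 / c) * ennreal ((6 * real r + 4) * sqrt (real N))"
    by (intro mult_left_mono nn_integral_radial_error_le) simp
  also have "\<dots> = ennreal (pi * (6 * real r + 4) / sqrt (real N))"
  proof -
    define s where "s = sqrt (real N)"
    have s: "s > 0" and sN: "real N = s * s"
      using N by (simp_all add: s_def)
    have "1 / c * ((6 * real r + 4) * s) = pi * (6 * real r + 4) / s"
      using s by (simp add: c_def sN field_simps)
    then have "1 / c * ((6 * real r + 4) * sqrt (real N)) = pi * (6 * real r + 4) / sqrt (real N)"
      by (simp add: s_def)
    then show ?thesis
      using c by (simp add: ennreal_mult[symmetric])
  qed
  finally show ?thesis
    by (simp add: c_def)
qed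

theorem theorem1p1:
  fixes r :: nat
  assumes "r > 0"
  shows "((\<lambda>N. \<integral>\<^sup>+ z. ennreal (cmod (rho r N (complex_of_real (sqrt (real N / pi)) * z)
              - complex_of_real (indicator (ball (0::complex) 1) z))) \<partial>lborel)
           \<longlonglongrightarrow> 0) \<and>
         (\<exists>C::real. \<forall>N::nat.
           (\<integral>\<^sup>+ z. ennreal (cmod (rho r N z
              - complex_of_real (indicator (ball (0::complex) (sqrt (real N / pi))) z))) \<partial>lborel)
           \<le> ennreal (C * sqrt (real N)))"
proof
  have "(\<lambda>N. pi * (6 * real r + 4) / sqrt (real N)) \<longlonglongrightarrow> 0"
    by (intro tendsto_divide_0[OF tendsto_const] filterlim_at_top_imp_at_infinity
        filterlim_compose[OF sqrt_at_top filterlim_real_sequentially])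
  then have lim: "(\<lambda>N. ennreal (pi * (6 * real r + 4) / sqrt (real N))) \<longlonglongrightarrow> 0"
    using tendsto_ennrealI by fastforce
  show "(\<lambda>N. \<integral>\<^sup>+ z. ennreal (cmod (rho r N (complex_of_real (sqrt (real N / pi)) * z)
              - complex_of_real (indicator (ball (0::complex) 1) z))) \<partial>lborel) \<longlonglongrightarrow> 0"
  proof (rule tendsto_sandwich[OF _ _ tendsto_const lim])
    show "\<forall>\<^sub>F N in sequentially. (\<integral>\<^sup>+ z. ennreal (cmod (rho r N (complex_of_real (sqrt (real N / pi)) * z)
        - complex_of_real (indicator (ball (0::complex) 1) z))) \<partial>lborel)
        \<le> ennreal (pi * (6 * real r + 4) / sqrt (real N))"
      using eventually_ge_at_top[of "1::nat"] by eventually_elim (rule nn_integral_norm_rho_rescaled_le)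
  qed simp
  show "\<exists>C::real. \<forall>N::nat.
      (\<integral>\<^sup>+ z. ennreal (cmod (rho r N z
         - complex_of_real (indicator (ball (0::complex) (sqrt (real N / pi))) z))) \<partial>lborel)
      \<le> ennreal (C * sqrt (real N))"
    using nn_integral_norm_rho_minus_indicator_le by blast
qed

end
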